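(* Let $\mathcal B$ be a finite set of finite algebras of signature $F$ and assume that $\mathcal B$ has a majority term. The algebras in $\mathcal B$ share a common ternary discriminator term if and only if, for all $\mathbf A_1,\mathbf A_2\in\mathcal B$, the algebras $\mathbf A_1$ and $\mathbf A_2$ share a common ternary discriminator term.
   Context: The ternary discriminator on a set $A$ is $\tau(x,y,z)=x$ if $x\ne y$, $=z$ if $x=y$. A family of algebras shares a common ternary discriminator term if there is a ternary term $t$ with $t^{\mathbf A}$ equal to the ternary discriminator on $A$ for each member $\mathbf A$. $\mathcal B$ has a majority term if some ternary term $m$ satisfies $m(x,x,y)=m(x,y,x)=m(y,x,x)=x$ in every algebra of $\mathcal B$. *)

theory Defs
  imports Main
begin

datatype ('f, 'v) trm = Var 'v | Fun 'f "('f, 'v) trm list"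

fun vars_term :: "('f, 'v) trm \<Rightarrow> 'v set" where
  "vars_term (Var v) = {v}"
| "vars_term (Fun f ts) = (\<Union>t \<in> set ts. vars_term t)"

fun wf_term :: "('f \<Rightarrow> nat) \<Rightarrow> ('f, 'v) trm \<Rightarrow> bool" where
  "wf_term ar (Var v) = True"
| "wf_term ar (Fun f ts) = (length ts = ar f \<and> (\<forall>t \<in> set ts. wf_term ar t))"

definition ternary_term :: "('f \<Rightarrow> nat) \<Rightarrow> ('f, nat) trm \<Rightarrow> bool" where
  "ternary_term ar t \<longleftrightarrow> wf_term ar t \<and> vars_term t \<subseteq> {0, 1, 2}"

record ('f, 'a) alg =
  carrier :: "'a set"
  ops :: "'f \<Rightarrow> 'a list \<Rightarrow> 'a"

definition is_algebra :: "('f \<Rightarrow> nat) \<Rightarrow> ('f, 'a) alg \<Rightarrow> bool" where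
  "is_algebra ar A \<longleftrightarrow> carrier A \<noteq> {} \<and>
     (\<forall>f xs. length xs = ar f \<and> set xs \<subseteq> carrier A \<longrightarrow> ops A f xs \<in> carrier A)"

definition finite_algebra :: "('f \<Rightarrow> nat) \<Rightarrow> ('f, 'a) alg \<Rightarrow> bool" where
  "finite_algebra ar A \<longleftrightarrow> is_algebra ar A \<and> finite (carrier A)"

fun eval :: "('f, 'a) alg \<Rightarrow> ('v \<Rightarrow> 'a) \<Rightarrow> ('f, 'v) trm \<Rightarrow> 'a" where
  "eval A \<rho> (Var v) = \<rho> v"
| "eval A \<rho> (Fun f ts) = ops A f (map (eval A \<rho>) ts)"

definition eval3 :: "('f, 'a) alg \<Rightarrow> ('f, nat) trm \<Rightarrow> 'a \<Rightarrow> 'a \<Rightarrow> 'a \<Rightarrow> 'a" where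
  "eval3 A t x y z = eval A (\<lambda>i. if i = 0 then x else if i = 1 then y else z) t"

definition discriminator :: "'a \<Rightarrow> 'a \<Rightarrow> 'a \<Rightarrow> 'a" where
  "discriminator x y z = (if x \<noteq> y then x else z)"

definition share_discriminator :: "('f \<Rightarrow> nat) \<Rightarrow> ('f, 'a) alg set \<Rightarrow> bool" where
  "share_discriminator ar \<B> \<longleftrightarrow> (\<exists>t. ternary_term ar t \<and>
     (\<forall>A \<in> \<B>. \<forall>x \<in> carrier A. \<forall>y \<in> carrier A. \<forall>z \<in> carrier A.
        eval3 A t x y z = discriminator x y z))"

definition has_majority_term :: "('f \<Rightarrow> nat) \<Rightarrow> ('f, 'a) alg set \<Rightarrow> bool" where
  "has_majority_term ar \<B> \<longleftrightarrow> (\<exists>m. ternary_term ar m \<and>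
     (\<forall>A \<in> \<B>. \<forall>x \<in> carrier A. \<forall>y \<in> carrier A.
        eval3 A m x x y = x \<and> eval3 A m x y x = x \<and> eval3 A m y x x = x))"

end

theory Submission
  imports Defs
begin

text \<open>This is the ternary case of the Baker--Pixley argument. Induct on the size of the family.
  If it has at least three members \<open>a, c, d\<close>, the induction hypothesis gives terms \<open>t\<^sub>1, t\<^sub>2, t\<^sub>3\<close>
  which interpolate the discriminator (indeed any operation closed on each algebra) on the family
  without \<open>a\<close>, without \<open>c\<close> and without \<open>d\<close>
  respectively. Every algebra is missed by at most one of the three deletions, so at least two of
  the values \<open>t\<^sub>i(x, y, z)\<close> agree with the discriminator, and applying the majority term to them
  yields a term interpolating the discriminator on the whole family.\<close>

fun tsubst :: "(nat \<Rightarrow> ('f, nat) trm) \<Rightarrow> ('f, nat) trm \<Rightarrow> ('f, nat) trm" where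
  "tsubst \<sigma> (Var v) = \<sigma> v"
| "tsubst \<sigma> (Fun f ts) = Fun f (map (tsubst \<sigma>) ts)"

lemma eval_tsubst: "eval A \<rho> (tsubst \<sigma> t) = eval A (\<lambda>v. eval A \<rho> (\<sigma> v)) t"
  by (induction t) (auto intro!: arg_cong[where f = "ops A _"])

lemma wf_term_tsubst:
  "(\<And>v. wf_term ar (\<sigma> v)) \<Longrightarrow> wf_term ar t \<Longrightarrow> wf_term ar (tsubst \<sigma> t)"
  by (induction t) auto

lemma vars_term_tsubst: "vars_term (tsubst \<sigma> t) = (\<Union>v \<in> vars_term t. vars_term (\<sigma> v))"
  by (induction t) auto

lemma eval_in_carrier:
  assumes "is_algebra ar A" "wf_term ar t" "\<And>v. \<rho> v \<in> carrier A"
  shows "eval A \<rho> t \<in> carrier A"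
  using assms(2)
proof (induction t)
  case (Var v)
  then show ?case using assms(3) by simp
next
  case (Fun f ts)
  then have "set (map (eval A \<rho>) ts) \<subseteq> carrier A" "length (map (eval A \<rho>) ts) = ar f"
    by auto
  then show ?case using assms(1) unfolding is_algebra_def by simp
qed

lemma eval3_in_carrier:
  "is_algebra ar A \<Longrightarrow> ternary_term ar t \<Longrightarrow> x \<in> carrier A \<Longrightarrow> y \<in> carrier A \<Longrightarrow>
   z \<in> carrier A \<Longrightarrow> eval3 A t x y z \<in> carrier A"
  unfolding eval3_def ternary_term_def by (rule eval_in_carrier) auto

definition comp3 :: "('f, nat) trm \<Rightarrow> ('f, nat) trm \<Rightarrow> ('f, nat) trm \<Rightarrow> ('f, nat) trm \<Rightarrow> ('f, nat) trm"
  where "comp3 m t1 t2 t3 = tsubst (\<lambda>i. if i = 0 then t1 else if i = 1 then t2 else t3) m"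

lemma eval3_comp3:
  "eval3 A (comp3 m t1 t2 t3) x y z =
   eval3 A m (eval3 A t1 x y z) (eval3 A t2 x y z) (eval3 A t3 x y z)"
  unfolding eval3_def comp3_def eval_tsubst
  by (rule arg_cong[where f = "\<lambda>\<rho>. eval A \<rho> m"]) auto

lemma ternary_term_comp3:
  "ternary_term ar m \<Longrightarrow> ternary_term ar t1 \<Longrightarrow> ternary_term ar t2 \<Longrightarrow> ternary_term ar t3 \<Longrightarrow>
   ternary_term ar (comp3 m t1 t2 t3)"
  unfolding ternary_term_def comp3_def vars_term_tsubst
  by (auto intro!: wf_term_tsubst split: if_splits)

definition interpolates :: "('f, 'a) alg set \<Rightarrow> ('f, nat) trm \<Rightarrow> ('a \<Rightarrow> 'a \<Rightarrow> 'a \<Rightarrow> 'a) \<Rightarrow> bool"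
  where "interpolates \<B> t \<phi> \<longleftrightarrow>
    (\<forall>A \<in> \<B>. \<forall>x \<in> carrier A. \<forall>y \<in> carrier A. \<forall>z \<in> carrier A. eval3 A t x y z = \<phi> x y z)"

definition majority_on :: "('f, 'a) alg set \<Rightarrow> ('f, nat) trm \<Rightarrow> bool"
  where "majority_on \<B> m \<longleftrightarrow> (\<forall>A \<in> \<B>. \<forall>x \<in> carrier A. \<forall>y \<in> carrier A.
    eval3 A m x x y = x \<and> eval3 A m x y x = x \<and> eval3 A m y x x = x)"

lemma share_discriminator_iff:
  "share_discriminator ar \<B> \<longleftrightarrow> (\<exists>t. ternary_term ar t \<and> interpolates \<B> t discriminator)"
  unfolding share_discriminator_def interpolates_def ..

lemma has_majority_term_iff:
  "has_majority_term ar \<B> \<longleftrightarrow> (\<exists>m. ternary_term ar m \<and> majority_on \<B> m)"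
  unfolding has_majority_term_def majority_on_def ..

lemma interpolates_subset: "interpolates \<B> t \<phi> \<Longrightarrow> \<C> \<subseteq> \<B> \<Longrightarrow> interpolates \<C> t \<phi>"
  unfolding interpolates_def by blast

lemma majority_on_subset: "majority_on \<B> m \<Longrightarrow> \<C> \<subseteq> \<B> \<Longrightarrow> majority_on \<C> m"
  unfolding majority_on_def by blast

lemma interpolates_comp3_majority:
  assumes alg: "\<forall>A \<in> \<B>. is_algebra ar A"
    and closed: "\<forall>A \<in> \<B>. \<forall>x \<in> carrier A. \<forall>y \<in> carrier A. \<forall>z \<in> carrier A. \<phi> x y z \<in> carrier A"
    and m: "majority_on \<B> m"
    and t: "ternary_term ar t1" "ternary_term ar t2" "ternary_term ar t3"
    and interp: "interpolates (\<B> - {a}) t1 \<phi>" "interpolates (\<B> - {c}) t2 \<phi>"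
      "interpolates (\<B> - {d}) t3 \<phi>"
    and distinct: "a \<noteq> c" "c \<noteq> d" "a \<noteq> d"
  shows "interpolates \<B> (comp3 m t1 t2 t3) \<phi>"
  unfolding interpolates_def eval3_comp3
proof (intro ballI)
  fix A x y z
  assume A: "A \<in> \<B>" and xyz: "x \<in> carrier A" "y \<in> carrier A" "z \<in> carrier A"
  let ?w1 = "eval3 A t1 x y z" and ?w2 = "eval3 A t2 x y z" and ?w3 = "eval3 A t3 x y z"
  have in_carrier: "?w1 \<in> carrier A" "?w2 \<in> carrier A" "?w3 \<in> carrier A" "\<phi> x y z \<in> carrier A"
    using eval3_in_carrier[OF _ _ xyz] alg closed t A xyz by auto
  have maj: "\<forall>u \<in> carrier A. \<forall>w \<in> carrier A.
      eval3 A m u u w = u \<and> eval3 A m u w u = u \<and> eval3 A m w u u = u"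
    using m A unfolding majority_on_def by blast
  consider "A \<noteq> a" "A \<noteq> c" | "A \<noteq> a" "A \<noteq> d" | "A \<noteq> c" "A \<noteq> d"
    using distinct by blast
  then show "eval3 A m ?w1 ?w2 ?w3 = \<phi> x y z"
  proof cases
    case 1
    then have "?w1 = \<phi> x y z" "?w2 = \<phi> x y z"
      using interp A xyz unfolding interpolates_def by auto
    then show ?thesis using maj in_carrier by simp
  next
    case 2
    then have "?w1 = \<phi> x y z" "?w3 = \<phi> x y z"
      using interp A xyz unfolding interpolates_def by auto
    then show ?thesis using maj in_carrier by simp
  next
    case 3
    then have "?w2 = \<phi> x y z" "?w3 = \<phi> x y z"
      using interp A xyz unfolding interpolates_def by auto
    then show ?thesis using maj in_carrier by simp
  qed
qed

lemma card_le_2_obtain_pair: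
  assumes "finite \<B>" "card \<B> \<le> 2" "\<B> \<noteq> {}"
  obtains A1 A2 where "A1 \<in> \<B>" "A2 \<in> \<B>" "\<B> = {A1, A2}"
proof -
  have "card \<B> = 1 \<or> card \<B> = 2"
    using assms by (simp add: card_gt_0_iff le_Suc_eq numeral_2_eq_2)
  then show thesis
    by (metis card_1_singletonE card_2_iff insertCI insert_absorb2 that)
qed

theorem pairwise_interpolation_imp_interpolation:
  assumes "finite \<B>"
    and "\<forall>A \<in> \<B>. is_algebra ar A"
    and "\<forall>A \<in> \<B>. \<forall>x \<in> carrier A. \<forall>y \<in> carrier A. \<forall>z \<in> carrier A. \<phi> x y z \<in> carrier A"
    and "ternary_term ar m" "majority_on \<B> m"
    and "\<forall>A1 \<in> \<B>. \<forall>A2 \<in> \<B>. \<exists>t. ternary_term ar t \<and> interpolates {A1, A2} t \<phi>"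
  shows "\<exists>t. ternary_term ar t \<and> interpolates \<B> t \<phi>"
  using assms
proof (induction "card \<B>" arbitrary: \<B> rule: less_induct)
  case less
  consider "\<B> = {}" | "\<B> \<noteq> {}" "card \<B> \<le> 2" | "card \<B> \<ge> 3"
    by linarith
  then show ?case
  proof cases
    case 1
    have "ternary_term ar (Var 0)" unfolding ternary_term_def by simp
    then show ?thesis unfolding 1 interpolates_def by blast
  next
    case 2
    then obtain A1 A2 where "A1 \<in> \<B>" "A2 \<in> \<B>" "\<B> = {A1, A2}"
      using card_le_2_obtain_pair less.prems(1) by metis
    then show ?thesis using less.prems(6) by simp
  next
    case 3
    then obtain a c d where acd: "{a, c, d} \<subseteq> \<B>" "a \<noteq> c" "c \<noteq> d" "a \<noteq> d"
      by (metis card_3_iff obtain_subset_with_card_n)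
    have deletion: "\<exists>t. ternary_term ar t \<and> interpolates (\<B> - {e}) t \<phi>" if "e \<in> \<B>" for e
    proof (rule less.hyps)
      show "card (\<B> - {e}) < card \<B>"
        using less.prems(1) that by (rule card_Diff1_less)
      show "majority_on (\<B> - {e}) m"
        using less.prems(5) by (rule majority_on_subset) blast
    qed (use less.prems in blast)+
    obtain t1 where t1: "ternary_term ar t1" "interpolates (\<B> - {a}) t1 \<phi>"
      using deletion acd(1) by blast
    obtain t2 where t2: "ternary_term ar t2" "interpolates (\<B> - {c}) t2 \<phi>"
      using deletion acd(1) by blast
    obtain t3 where t3: "ternary_term ar t3" "interpolates (\<B> - {d}) t3 \<phi>"
      using deletion acd(1) by blast
    have "interpolates \<B> (comp3 m t1 t2 t3) \<phi>"
      by (rule interpolates_comp3_majority[OF less.prems(2,3,5) t1(1) t2(1) t3(1) t1(2) t2(2) t3(2)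
          acd(2-4)])
    moreover have "ternary_term ar (comp3 m t1 t2 t3)"
      using less.prems(4) t1(1) t2(1) t3(1) by (rule ternary_term_comp3)
    ultimately show ?thesis by blast
  qed
qed

theorem corollary3p3:
  fixes ar :: "'f \<Rightarrow> nat" and \<B> :: "('f, 'a) alg set"
  assumes "finite \<B>"
    and "\<forall>A \<in> \<B>. finite_algebra ar A"
    and "has_majority_term ar \<B>"
  shows "share_discriminator ar \<B> \<longleftrightarrow>
         (\<forall>A1 \<in> \<B>. \<forall>A2 \<in> \<B>. share_discriminator ar {A1, A2})"
proof
  assume "share_discriminator ar \<B>"
  then show "\<forall>A1 \<in> \<B>. \<forall>A2 \<in> \<B>. share_discriminator ar {A1, A2}"
    unfolding share_discriminator_iff by (meson empty_subsetI insert_subset interpolates_subset)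
next
  assume "\<forall>A1 \<in> \<B>. \<forall>A2 \<in> \<B>. share_discriminator ar {A1, A2}"
  moreover obtain m where "ternary_term ar m" "majority_on \<B> m"
    using assms(3) unfolding has_majority_term_iff by blast
  moreover have "\<forall>A \<in> \<B>. is_algebra ar A"
    using assms(2) unfolding finite_algebra_def by blast
  moreover have "\<forall>A \<in> \<B>. \<forall>x \<in> carrier A. \<forall>y \<in> carrier A. \<forall>z \<in> carrier A.
      discriminator x y z \<in> carrier A"
    unfolding discriminator_def by simp
  ultimately show "share_discriminator ar \<B>"
    unfolding share_discriminator_iff
    using pairwise_interpolation_imp_interpolation[OF assms(1)] by blast
qed

end
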